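(* Let $a,b,c\in\mathbb{R}$ with $c\neq0$. Let $\theta_\pm$ be the roots of the quadratic $-3c\theta^2+\sqrt3(a-b)\theta+(a+b+c)$, and let $\theta_1,\theta_2,\theta_3$ be the roots of the cubic $-3c\theta^3+\sqrt3(a-b)\theta^2+(4a+4b+c)\theta+\sqrt3(a-b)$, assumed pairwise distinct. For $(u,v,w)$ with $u,v,w$ pairwise distinct put $\theta(u,v,w)=\frac{u+v-2w}{\sqrt3(u-v)}$, and let $\Omega\subset\mathbb{R}^3$ be a connected open set on which $u,v,w$ are pairwise distinct and $\theta\neq\theta_1,\theta_2,\theta_3$, with continuous branches of the logarithms below chosen on $\Omega$. Define $$\begin{aligned}h(u,v,w)={}&(\theta_1-\theta_2)(\theta_2-\theta_3)(\theta_3-\theta_1)\ln\frac{u-v}{\sqrt2}\\&-(\theta_1-\theta_+)(\theta_2-\theta_3)(\theta_1-\theta_-)\ln(\theta-\theta_1)\\&-(\theta_2-\theta_+)(\theta_2-\theta_-)(\theta_3-\theta_1)\ln(\theta-\theta_2)\\&-(\theta_1-\theta_2)(\theta_3-\theta_+)(\theta_3-\theta_-)\ln(\theta-\theta_3).\end{aligned}$$ Then $h$ is constant along every solution curve contained in $\Omega$ of $$u'=\frac{c}{u-v}+\frac{b}{u-w},\quad v'=\frac{a}{v-w}+\frac{c}{v-u},\quad w'=\frac{b}{w-u}+\frac{a}{w-v}.$$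
   Context: The roots $\theta_\pm,\theta_i$ may be complex, in which case $h$ is complex-valued and the logarithms are continuous complex branches on $\Omega$. *)

theory Defs
  imports "HOL-Analysis.Analysis"
begin

definition theta :: "real \<Rightarrow> real \<Rightarrow> real \<Rightarrow> real" where
  "theta u v w = (u + v - 2 * w) / (sqrt 3 * (u - v))"

text \<open>The function h, expressed through chosen (continuous) logarithm branches
  L0 of (u-v)/sqrt 2 and Lk of theta - theta_k (k = 1,2,3).\<close>
definition hfun ::
  "complex \<Rightarrow> complex \<Rightarrow> complex \<Rightarrow> complex \<Rightarrow> complex \<Rightarrow>
   complex \<Rightarrow> complex \<Rightarrow> complex \<Rightarrow> complex \<Rightarrow> complex" where
  "hfun th1 th2 th3 thpl thmn L0 L1 L2 L3 =
     (th1 - th2) * (th2 - th3) * (th3 - th1) * L0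
     - (th1 - thpl) * (th2 - th3) * (th1 - thmn) * L1
     - (th2 - thpl) * (th2 - thmn) * (th3 - th1) * L2
     - (th1 - th2) * (th3 - thpl) * (th3 - thmn) * L3"

end

theory Submission
  imports Defs
begin

text \<open>Put \<open>D = (\<theta>\<^sub>1 - \<theta>\<^sub>2)(\<theta>\<^sub>2 - \<theta>\<^sub>3)(\<theta>\<^sub>3 - \<theta>\<^sub>1)\<close> and let \<open>P\<close>, \<open>Q\<close> be the cubic and the quadratic
  of the statement. The coefficient of \<open>ln (\<theta> - \<theta>\<^sub>k)\<close> in \<open>h\<close> is \<open>D\<close> times the residue of \<open>Q / P\<close>
  at \<open>\<theta>\<^sub>k\<close>, so along a solution \<open>h' = D ((u' - v') / (u - v) + \<theta>' Q(\<theta>) / P(\<theta>))\<close>. The vector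
  field is homogeneous of degree -1 and \<open>\<theta>\<close> of degree 0, so \<open>(u' - v') (u - v)\<close> and
  \<open>(u - v)\<^sup>2 \<theta>'\<close> are rational functions of \<open>\<theta>\<close> alone; computing them gives
  \<open>(u' - v') / (u - v) \<cdot> P(\<theta>) + \<theta>' \<cdot> Q(\<theta>) = 0\<close>.\<close>

lemma continuous_log_has_vector_derivative:
  fixes f g :: "real \<Rightarrow> complex"
  assumes f_cont: "continuous_on S f" and exp_f: "\<And>s. s \<in> S \<Longrightarrow> exp (f s) = g s"
    and t: "t \<in> S" and g_deriv: "(g has_vector_derivative g') (at t within S)"
  shows "(f has_vector_derivative g' / g t) (at t within S)"
proof -
  have "g t \<noteq> 0"
    using exp_f[OF t] exp_not_eq_zero by metis
  obtain d where "d > 0" and d: "\<And>s. s \<in> S \<Longrightarrow> dist s t < d \<Longrightarrow> dist (f s) (f t) < pi"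
    using f_cont t pi_gt_zero unfolding continuous_on_iff by metis
  define k where "k = (\<lambda>s. g s / g t)"
  have "(k has_vector_derivative g' / g t) (at t within S)"
    using has_vector_derivative_mult_right[OF g_deriv, of "inverse (g t)"]
    by (simp add: k_def field_simps)
  moreover have "(Ln has_field_derivative 1) (at (k t) within k ` S)"
    using \<open>g t \<noteq> 0\<close> has_field_derivative_Ln[of 1]
    by (simp add: k_def has_field_derivative_at_within nonpos_Reals_def)
  ultimately have "((Ln \<circ> k) has_vector_derivative g' / g t * 1) (at t within S)"
    by (rule field_vector_diff_chain_within)
  then have "((\<lambda>s. f t + Ln (k s)) has_vector_derivative 0 + g' / g t) (at t within S)"
    by (intro has_vector_derivative_add has_vector_derivative_const) (simp add: o_def)
  then show ?thesis
    unfolding add_0_left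
  proof (rule has_vector_derivative_transform_within[OF _ \<open>d > 0\<close> t])
    fix s assume s: "s \<in> S" "dist s t < d"
    have "exp (f s - f t) = k s"
      using exp_f[OF s(1)] exp_f[OF t] by (simp add: k_def exp_diff)
    moreover have "\<bar>Im (f s - f t)\<bar> < pi"
      using abs_Im_le_cmod[of "f s - f t"] d[OF s] by (simp add: dist_norm)
    ultimately show "f t + Ln (k s) = f s"
      using Ln_exp[of "f s - f t"] by simp
  qed
qed

lemma has_vector_derivative_hfun:
  assumes "(L0 has_vector_derivative L0') F" "(L1 has_vector_derivative L1') F"
    "(L2 has_vector_derivative L2') F" "(L3 has_vector_derivative L3') F"
  shows "((\<lambda>t. hfun th1 th2 th3 thpl thmn (L0 t) (L1 t) (L2 t) (L3 t)) has_vector_derivative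
           hfun th1 th2 th3 thpl thmn L0' L1' L2' L3') F"
  unfolding hfun_def by (intro has_vector_derivative_diff has_vector_derivative_mult_right assms)

definition theta_deriv :: "real \<Rightarrow> real \<Rightarrow> real \<Rightarrow> real \<Rightarrow> real \<Rightarrow> real \<Rightarrow> real" where
  "theta_deriv u v w u' v' w' = 2 * (u' * (w - v) + v' * (u - w) + w' * (v - u)) / (sqrt 3 * (u - v)\<^sup>2)"

lemma theta_has_real_derivative:
  assumes "(u has_real_derivative u') (at t within S)" "(v has_real_derivative v') (at t within S)"
    "(w has_real_derivative w') (at t within S)" "u t \<noteq> v t"
  shows "((\<lambda>s. theta (u s) (v s) (w s)) has_real_derivative theta_deriv (u t) (v t) (w t) u' v' w')
           (at t within S)"
  unfolding theta_def theta_deriv_def using assms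
  by (auto intro!: derivative_eq_intros simp: divide_simps) (simp add: algebra_simps power2_eq_square)

lemma hfun_along_curve_has_vector_derivative:
  fixes L0 L1 L2 L3 :: "real \<times> real \<times> real \<Rightarrow> complex" and u v w :: "real \<Rightarrow> real"
  assumes L_cont: "continuous_on \<Omega> L0" "continuous_on \<Omega> L1" "continuous_on \<Omega> L2" "continuous_on \<Omega> L3"
    and L0_log: "\<And>x y z. (x, y, z) \<in> \<Omega> \<Longrightarrow> exp (L0 (x, y, z)) = of_real ((x - y) / sqrt 2)"
    and L1_log: "\<And>x y z. (x, y, z) \<in> \<Omega> \<Longrightarrow> exp (L1 (x, y, z)) = of_real (theta x y z) - th1"
    and L2_log: "\<And>x y z. (x, y, z) \<in> \<Omega> \<Longrightarrow> exp (L2 (x, y, z)) = of_real (theta x y z) - th2"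
    and L3_log: "\<And>x y z. (x, y, z) \<in> \<Omega> \<Longrightarrow> exp (L3 (x, y, z)) = of_real (theta x y z) - th3"
    and curve_in: "\<And>s. s \<in> I \<Longrightarrow> (u s, v s, w s) \<in> \<Omega>"
    and curve_cont: "continuous_on I (\<lambda>s. (u s, v s, w s))"
    and t: "t \<in> I"
    and du: "(u has_real_derivative u') (at t within I)"
    and dv: "(v has_real_derivative v') (at t within I)"
    and dw: "(w has_real_derivative w') (at t within I)"
  defines "\<theta> \<equiv> theta (u t) (v t) (w t)" and "\<theta>' \<equiv> theta_deriv (u t) (v t) (w t) u' v' w'"
  shows "((\<lambda>s. hfun th1 th2 th3 thpl thmn (L0 (u s, v s, w s)) (L1 (u s, v s, w s))
            (L2 (u s, v s, w s)) (L3 (u s, v s, w s))) has_vector_derivative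
          hfun th1 th2 th3 thpl thmn (of_real ((u' - v') / (u t - v t)))
            (of_real \<theta>' / (of_real \<theta> - th1)) (of_real \<theta>' / (of_real \<theta> - th2))
            (of_real \<theta>' / (of_real \<theta> - th3))) (at t within I)"
proof -
  have log_rate: "((\<lambda>s. L (u s, v s, w s)) has_vector_derivative G / g t) (at t within I)"
    if "continuous_on \<Omega> L" "\<And>s. s \<in> I \<Longrightarrow> exp (L (u s, v s, w s)) = g s"
      "(g has_vector_derivative G) (at t within I)"
    for L :: "real \<times> real \<times> real \<Rightarrow> complex" and g G
  proof -
    have "continuous_on I (\<lambda>s. L (u s, v s, w s))"
      using continuous_on_compose2[OF that(1) curve_cont] curve_in by blast
    then show ?thesis
      using that(2) t that(3) by (rule continuous_log_has_vector_derivative)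
  qed
  have "((\<lambda>s. of_real ((u s - v s) / sqrt 2)) has_vector_derivative of_real ((u' - v') / sqrt 2))
      (at t within I)"
    by (intro has_vector_derivative_of_real DERIV_cdivide DERIV_diff du dv)
  then have "((\<lambda>s. L0 (u s, v s, w s)) has_vector_derivative
      of_real ((u' - v') / sqrt 2) / of_real ((u t - v t) / sqrt 2)) (at t within I)"
    by (rule log_rate[OF L_cont(1), where g = "\<lambda>s. of_real ((u s - v s) / sqrt 2)", rotated])
      (use L0_log curve_in in auto)
  then have d0: "((\<lambda>s. L0 (u s, v s, w s)) has_vector_derivative of_real ((u' - v') / (u t - v t)))
      (at t within I)"
    by (simp flip: of_real_divide)
  have "of_real ((u t - v t) / sqrt 2) \<noteq> (0 :: complex)"
    using L0_log[OF curve_in[OF t]] exp_not_eq_zero by metis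
  then have "((\<lambda>s. theta (u s) (v s) (w s)) has_real_derivative \<theta>') (at t within I)"
    unfolding \<theta>'_def by (intro theta_has_real_derivative du dv dw) simp
  then have "((\<lambda>s. of_real (theta (u s) (v s) (w s)) - thk) has_vector_derivative of_real \<theta>')
      (at t within I)" for thk
    using has_vector_derivative_diff[OF has_vector_derivative_of_real has_vector_derivative_const] by simp
  then have dk: "((\<lambda>s. L (u s, v s, w s)) has_vector_derivative of_real \<theta>' / (of_real \<theta> - thk))
      (at t within I)"
    if "continuous_on \<Omega> L" "\<And>x y z. (x, y, z) \<in> \<Omega> \<Longrightarrow> exp (L (x, y, z)) = of_real (theta x y z) - thk"
    for L :: "real \<times> real \<times> real \<Rightarrow> complex" and thk
    unfolding \<theta>_def
    by (rule log_rate[OF that(1), where g = "\<lambda>s. of_real (theta (u s) (v s) (w s)) - thk", rotated])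
      (use that(2) curve_in in auto)
  show ?thesis
    by (rule has_vector_derivative_hfun[OF d0 dk[OF L_cont(2) L1_log] dk[OF L_cont(3) L2_log]
          dk[OF L_cont(4) L3_log]])
qed

definition theta_cubic :: "real \<Rightarrow> real \<Rightarrow> real \<Rightarrow> real \<Rightarrow> real" where
  "theta_cubic a b c \<theta> = - 3 * c * \<theta> ^ 3 + sqrt 3 * (a - b) * \<theta>\<^sup>2 + (4 * a + 4 * b + c) * \<theta> + sqrt 3 * (a - b)"

definition theta_quadratic :: "real \<Rightarrow> real \<Rightarrow> real \<Rightarrow> real \<Rightarrow> real" where
  "theta_quadratic a b c \<theta> = - 3 * c * \<theta>\<^sup>2 + sqrt 3 * (a - b) * \<theta> + (a + b + c)"

text \<open>\<open>\<sigma> = \<surd>3 \<theta>\<close>; in this variable all coefficients are rational.\<close>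

lemma ode_rhs_sigma_form:
  fixes a b c u v w u' v' w' \<sigma> :: real
  assumes "u \<noteq> v" "u \<noteq> w" "v \<noteq> w"
    and u'_eq: "u' = c / (u - v) + b / (u - w)"
    and v'_eq: "v' = a / (v - w) + c / (v - u)"
    and w'_eq: "w' = b / (w - u) + a / (w - v)"
    and \<sigma>_eq: "\<sigma> = (u + v - 2 * w) / (u - v)"
  shows "(\<sigma> + 1) * (\<sigma> - 1) \<noteq> 0"
    and "(u' - v') * (u - v) * (\<sigma> + 1) * (\<sigma> - 1)
           = 2 * (c * (\<sigma> + 1) * (\<sigma> - 1) + b * (\<sigma> - 1) - a * (\<sigma> + 1))"
    and "(u' * (w - v) + v' * (u - w) + w' * (v - u)) * (\<sigma> + 1) * (\<sigma> - 1)
           = - c * \<sigma> * (\<sigma> + 1) * (\<sigma> - 1) + b * (3 - \<sigma>) * (\<sigma> - 1) + a * (\<sigma> + 3) * (\<sigma> + 1)"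
proof -
  define x y z where "x = u - v" and "y = u - w" and "z = v - w"
  have ne: "x \<noteq> 0" "y \<noteq> 0" "z \<noteq> 0"
    using assms(1-3) by (auto simp: x_def y_def z_def)
  have x: "x = y - z"
    by (simp add: x_def y_def z_def)
  have diffs: "u - v = x" "u - w = y" "v - w = z" "v - u = - x" "w - u = - y" "w - v = - z"
    "u + v - 2 * w = y + z"
    by (simp_all add: x_def y_def z_def)
  have \<sigma>: "\<sigma> = (y + z) / x"
    by (simp add: \<sigma>_eq diffs)
  have \<sigma>_pm: "\<sigma> + 1 = 2 * y / x" "\<sigma> - 1 = 2 * z / x"
    using ne x by (simp_all add: \<sigma> field_simps)
  show "(\<sigma> + 1) * (\<sigma> - 1) \<noteq> 0"
    using ne by (simp add: \<sigma>_pm)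
  show "(u' - v') * (u - v) * (\<sigma> + 1) * (\<sigma> - 1)
          = 2 * (c * (\<sigma> + 1) * (\<sigma> - 1) + b * (\<sigma> - 1) - a * (\<sigma> + 1))"
    unfolding u'_eq v'_eq diffs \<sigma>_pm using ne by (simp add: field_simps)
  show "(u' * (w - v) + v' * (u - w) + w' * (v - u)) * (\<sigma> + 1) * (\<sigma> - 1)
          = - c * \<sigma> * (\<sigma> + 1) * (\<sigma> - 1) + b * (3 - \<sigma>) * (\<sigma> - 1) + a * (\<sigma> + 3) * (\<sigma> + 1)"
    unfolding u'_eq v'_eq w'_eq diffs \<sigma>_pm unfolding \<sigma> using ne
    by (simp add: field_simps) (simp add: x algebra_simps)
qed

lemma sigma_cubic_quadratic_identity:
  fixes a b c \<sigma> :: real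
  shows "(c * (\<sigma> + 1) * (\<sigma> - 1) + b * (\<sigma> - 1) - a * (\<sigma> + 1))
           * (- c * \<sigma> ^ 3 + (a - b) * \<sigma>\<^sup>2 + (4 * a + 4 * b + c) * \<sigma> + 3 * (a - b))
       + (- c * \<sigma> * (\<sigma> + 1) * (\<sigma> - 1) + b * (3 - \<sigma>) * (\<sigma> - 1) + a * (\<sigma> + 3) * (\<sigma> + 1))
           * (- c * \<sigma>\<^sup>2 + (a - b) * \<sigma> + (a + b + c)) = 0"
  by (simp add: algebra_simps power2_eq_square power3_eq_cube)

lemma theta_cubic_quadratic_relation:
  fixes a b c u v w u' v' w' :: real
  assumes distinct: "u \<noteq> v" "u \<noteq> w" "v \<noteq> w"
    and ode: "u' = c / (u - v) + b / (u - w)" "v' = a / (v - w) + c / (v - u)"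
      "w' = b / (w - u) + a / (w - v)"
  shows "(u' - v') / (u - v) * theta_cubic a b c (theta u v w)
           + theta_deriv u v w u' v' w' * theta_quadratic a b c (theta u v w) = 0"
proof -
  define \<sigma> where "\<sigma> = (u + v - 2 * w) / (u - v)"
  define P where "P = - c * \<sigma> ^ 3 + (a - b) * \<sigma>\<^sup>2 + (4 * a + 4 * b + c) * \<sigma> + 3 * (a - b)"
  define Q where "Q = - c * \<sigma>\<^sup>2 + (a - b) * \<sigma> + (a + b + c)"
  define B where "B = u' * (w - v) + v' * (u - w) + w' * (v - u)"
  note sigma_form = ode_rhs_sigma_form[OF distinct ode \<sigma>_def]
  have \<theta>: "theta u v w = \<sigma> / sqrt 3"
    by (simp add: theta_def \<sigma>_def)
  have sqrt3: "sqrt 3 * (sqrt 3 * x) = 3 * x" for x :: real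
    by (simp add: mult.assoc[symmetric])
  have P: "theta_cubic a b c (theta u v w) = P / sqrt 3"
    unfolding \<theta> theta_cubic_def P_def by (simp add: field_simps power2_eq_square power3_eq_cube sqrt3)
  have Q: "theta_quadratic a b c (theta u v w) = Q"
    unfolding \<theta> theta_quadratic_def Q_def by (simp add: field_simps power2_eq_square)
  have "((u' - v') * (u - v) * P + 2 * B * Q) * ((\<sigma> + 1) * (\<sigma> - 1))
      = (u' - v') * (u - v) * (\<sigma> + 1) * (\<sigma> - 1) * P + 2 * (B * (\<sigma> + 1) * (\<sigma> - 1)) * Q"
    by (simp add: algebra_simps)
  also have "\<dots> = 2 * ((c * (\<sigma> + 1) * (\<sigma> - 1) + b * (\<sigma> - 1) - a * (\<sigma> + 1)) * P
      + (- c * \<sigma> * (\<sigma> + 1) * (\<sigma> - 1) + b * (3 - \<sigma>) * (\<sigma> - 1) + a * (\<sigma> + 3) * (\<sigma> + 1)) * Q)"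
    unfolding sigma_form(2) B_def sigma_form(3) by (simp add: algebra_simps)
  also have "\<dots> = 0"
    using sigma_cubic_quadratic_identity[where a = a and b = b and c = c and \<sigma> = \<sigma>]
    by (simp add: P_def Q_def)
  finally have "(u' - v') * (u - v) * P + 2 * B * Q = 0"
    using sigma_form(1) by simp
  moreover have "(u' - v') / x * (P / sqrt 3) + 2 * B / (sqrt 3 * x\<^sup>2) * Q
      = ((u' - v') * x * P + 2 * B * Q) / (sqrt 3 * x\<^sup>2)" if "x \<noteq> 0" for x
    using that by (simp add: field_simps power2_eq_square)
  ultimately show ?thesis
    unfolding P Q theta_deriv_def B_def[symmetric] using distinct(1) by simp
qed

lemma lagrange_partial_fractions:
  fixes t1 t2 t3 tp tm z :: "'a::field"
  assumes "z \<noteq> t1" "z \<noteq> t2" "z \<noteq> t3"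
  shows "(t1 - tp) * (t2 - t3) * (t1 - tm) / (z - t1) + (t2 - tp) * (t2 - tm) * (t3 - t1) / (z - t2)
           + (t1 - t2) * (t3 - tp) * (t3 - tm) / (z - t3)
       = - ((t1 - t2) * (t2 - t3) * (t3 - t1) * ((z - tp) * (z - tm)) / ((z - t1) * (z - t2) * (z - t3)))"
proof -
  define d1 d2 d3 where "d1 = z - t1" and "d2 = z - t2" and "d3 = z - t3"
  have t: "t1 = z - d1" "t2 = z - d2" "t3 = z - d3"
    by (simp_all add: d1_def d2_def d3_def)
  have "d1 \<noteq> 0" "d2 \<noteq> 0" "d3 \<noteq> 0"
    using assms by (simp_all add: d1_def d2_def d3_def)
  then show ?thesis
    unfolding t by (simp add: field_simps)
qed

lemma hfun_log_rates_cancel: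
  fixes a b c r \<theta> \<theta>' :: real
  assumes "c \<noteq> 0"
    and quad: "\<And>z::complex. - 3 * of_real c * z ^ 2 + of_real (sqrt 3 * (a - b)) * z
                  + of_real (a + b + c) = - 3 * of_real c * (z - thpl) * (z - thmn)"
    and cubic: "\<And>z::complex. - 3 * of_real c * z ^ 3 + of_real (sqrt 3 * (a - b)) * z ^ 2
                  + of_real (4 * a + 4 * b + c) * z + of_real (sqrt 3 * (a - b))
                  = - 3 * of_real c * (z - th1) * (z - th2) * (z - th3)"
    and roots: "of_real \<theta> \<noteq> th1" "of_real \<theta> \<noteq> th2" "of_real \<theta> \<noteq> th3"
    and rel: "r * theta_cubic a b c \<theta> + \<theta>' * theta_quadratic a b c \<theta> = 0"
  shows "hfun th1 th2 th3 thpl thmn (of_real r) (of_real \<theta>' / (of_real \<theta> - th1))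
           (of_real \<theta>' / (of_real \<theta> - th2)) (of_real \<theta>' / (of_real \<theta> - th3)) = 0"
proof -
  define z where "z = (of_real \<theta> :: complex)"
  define D where "D = (th1 - th2) * (th2 - th3) * (th3 - th1)"
  define P where "P = (z - th1) * (z - th2) * (z - th3)"
  have z: "z \<noteq> th1" "z \<noteq> th2" "z \<noteq> th3"
    using roots by (simp_all add: z_def)
  then have "P \<noteq> 0"
    by (simp add: P_def)
  have "- 3 * of_real c * P = - 3 * of_real c * (z - th1) * (z - th2) * (z - th3)"
    by (simp add: P_def mult.assoc)
  also have "\<dots> = of_real (theta_cubic a b c \<theta>)"
    using cubic[of z] by (simp add: z_def theta_cubic_def)
  finally have cubic_z: "- 3 * of_real c * P = of_real (theta_cubic a b c \<theta>)" .
  have quad_z: "- 3 * of_real c * (z - thpl) * (z - thmn) = of_real (theta_quadratic a b c \<theta>)"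
    using quad[of z] by (simp add: z_def theta_quadratic_def)
  have "- 3 * of_real c * (of_real r * P + of_real \<theta>' * ((z - thpl) * (z - thmn)))
      = of_real r * (- 3 * of_real c * P) + of_real \<theta>' * (- 3 * of_real c * (z - thpl) * (z - thmn))"
    by (simp add: algebra_simps)
  also have "\<dots> = 0"
    unfolding cubic_z quad_z using rel by (simp flip: of_real_mult of_real_add)
  finally have numerator_0: "of_real r * P + of_real \<theta>' * ((z - thpl) * (z - thmn)) = 0"
    using \<open>c \<noteq> 0\<close> by simp
  have "hfun th1 th2 th3 thpl thmn (of_real r) (of_real \<theta>' / (z - th1))
          (of_real \<theta>' / (z - th2)) (of_real \<theta>' / (z - th3))
      = D * of_real r - of_real \<theta>' * ((th1 - thpl) * (th2 - th3) * (th1 - thmn) / (z - th1)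
          + (th2 - thpl) * (th2 - thmn) * (th3 - th1) / (z - th2)
          + (th1 - th2) * (th3 - thpl) * (th3 - thmn) / (z - th3))"
    by (simp add: hfun_def D_def distrib_left diff_diff_eq mult_ac)
  also have "\<dots> = D * (of_real r * P + of_real \<theta>' * ((z - thpl) * (z - thmn))) / P"
    unfolding lagrange_partial_fractions[OF z, folded D_def P_def] using \<open>P \<noteq> 0\<close>
    by (simp add: field_simps)
  also have "\<dots> = 0"
    by (simp add: numerator_0)
  finally show ?thesis
    by (simp add: z_def)
qed

theorem mainTheorem9:
  fixes a b c :: real
    and thpl thmn th1 th2 th3 :: complex
    and \<Omega> :: "(real \<times> real \<times> real) set"
    and L0 L1 L2 L3 :: "real \<times> real \<times> real \<Rightarrow> complex"
    and I :: "real set"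
    and u v w :: "real \<Rightarrow> real"
  assumes c_nz: "c \<noteq> 0"
    and quad: "\<And>z::complex. - 3 * of_real c * z ^ 2 + of_real (sqrt 3 * (a - b)) * z
                  + of_real (a + b + c) = - 3 * of_real c * (z - thpl) * (z - thmn)"
    and cubic: "\<And>z::complex. - 3 * of_real c * z ^ 3 + of_real (sqrt 3 * (a - b)) * z ^ 2
                  + of_real (4 * a + 4 * b + c) * z + of_real (sqrt 3 * (a - b))
                  = - 3 * of_real c * (z - th1) * (z - th2) * (z - th3)"
    and roots_distinct: "th1 \<noteq> th2" "th2 \<noteq> th3" "th1 \<noteq> th3"
    and Omega_open: "open \<Omega>" and Omega_conn: "connected \<Omega>"
    and Omega_dist: "\<And>x y z. (x, y, z) \<in> \<Omega> \<Longrightarrow> x \<noteq> y \<and> y \<noteq> z \<and> x \<noteq> z"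
    and Omega_theta: "\<And>x y z. (x, y, z) \<in> \<Omega> \<Longrightarrow>
           of_real (theta x y z) \<noteq> th1 \<and> of_real (theta x y z) \<noteq> th2 \<and>
           of_real (theta x y z) \<noteq> th3"
    and L_cont: "continuous_on \<Omega> L0" "continuous_on \<Omega> L1"
                "continuous_on \<Omega> L2" "continuous_on \<Omega> L3"
    and L0_log: "\<And>x y z. (x, y, z) \<in> \<Omega> \<Longrightarrow> exp (L0 (x, y, z)) = of_real ((x - y) / sqrt 2)"
    and L1_log: "\<And>x y z. (x, y, z) \<in> \<Omega> \<Longrightarrow> exp (L1 (x, y, z)) = of_real (theta x y z) - th1"
    and L2_log: "\<And>x y z. (x, y, z) \<in> \<Omega> \<Longrightarrow> exp (L2 (x, y, z)) = of_real (theta x y z) - th2"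
    and L3_log: "\<And>x y z. (x, y, z) \<in> \<Omega> \<Longrightarrow> exp (L3 (x, y, z)) = of_real (theta x y z) - th3"
    and I_int: "is_interval I"
    and curve_in: "\<And>t. t \<in> I \<Longrightarrow> (u t, v t, w t) \<in> \<Omega>"
    and ode_u: "\<And>t. t \<in> I \<Longrightarrow>
        (u has_real_derivative (c / (u t - v t) + b / (u t - w t))) (at t within I)"
    and ode_v: "\<And>t. t \<in> I \<Longrightarrow>
        (v has_real_derivative (a / (v t - w t) + c / (v t - u t))) (at t within I)"
    and ode_w: "\<And>t. t \<in> I \<Longrightarrow>
        (w has_real_derivative (b / (w t - u t) + a / (w t - v t))) (at t within I)"
  shows "\<And>s t. s \<in> I \<Longrightarrow> t \<in> I \<Longrightarrow>
      hfun th1 th2 th3 thpl thmn (L0 (u s, v s, w s)) (L1 (u s, v s, w s))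
           (L2 (u s, v s, w s)) (L3 (u s, v s, w s))
    = hfun th1 th2 th3 thpl thmn (L0 (u t, v t, w t)) (L1 (u t, v t, w t))
           (L2 (u t, v t, w t)) (L3 (u t, v t, w t))"
proof -
  have curve_cont: "continuous_on I (\<lambda>t. (u t, v t, w t))"
    using ode_u ode_v ode_w
    by (auto simp: continuous_on_eq_continuous_within intro!: continuous_Pair DERIV_continuous)
  have "((\<lambda>t. hfun th1 th2 th3 thpl thmn (L0 (u t, v t, w t)) (L1 (u t, v t, w t))
           (L2 (u t, v t, w t)) (L3 (u t, v t, w t))) has_vector_derivative 0) (at t within I)"
    if t: "t \<in> I" for t
  proof -
    define u' v' w' where "u' = c / (u t - v t) + b / (u t - w t)"
      and "v' = a / (v t - w t) + c / (v t - u t)" and "w' = b / (w t - u t) + a / (w t - v t)"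
    have distinct: "u t \<noteq> v t" "u t \<noteq> w t" "v t \<noteq> w t"
      using Omega_dist[OF curve_in[OF t]] by auto
    have avoid: "of_real (theta (u t) (v t) (w t)) \<noteq> th1" "of_real (theta (u t) (v t) (w t)) \<noteq> th2"
      "of_real (theta (u t) (v t) (w t)) \<noteq> th3"
      using Omega_theta[OF curve_in[OF t]] by auto
    show ?thesis
      using hfun_along_curve_has_vector_derivative[where thpl = thpl and thmn = thmn,
          OF L_cont L0_log L1_log L2_log L3_log curve_in curve_cont t
          ode_u[OF t, folded u'_def] ode_v[OF t, folded v'_def] ode_w[OF t, folded w'_def]]
        hfun_log_rates_cancel[OF c_nz quad cubic avoid
          theta_cubic_quadratic_relation[OF distinct u'_def v'_def w'_def]]
      by simp
  qed
  then have "\<exists>k. \<forall>t\<in>I. hfun th1 th2 th3 thpl thmn (L0 (u t, v t, w t)) (L1 (u t, v t, w t))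
      (L2 (u t, v t, w t)) (L3 (u t, v t, w t)) = k"
    by (intro has_derivative_zero_constant[OF is_interval_convex_1[THEN iffD1, OF I_int]])
      (simp add: has_vector_derivative_def)
  then show "\<And>s t. s \<in> I \<Longrightarrow> t \<in> I \<Longrightarrow> ?thesis s t"
    by metis
qed

end
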